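(* Let $\mathbf X=(X_1,\dots,X_n)$ and $\mathbf Y=(Y_1,\dots,Y_m)$ be variables and let $\mathcal A$ be the unital complex algebra generated by $\mathbf X,\mathbf Y$ subject only to the relations $[X_i,Y_j]=0$ for all $i,j$ (i.e. $\mathbb C\langle\mathbf X,\mathbf Y\rangle$ modulo the two-sided ideal generated by these commutators). Define $\Theta_{(1,2)}:\mathcal A\otimes\mathcal A\to\mathcal A\otimes\mathcal A$ by $\Theta_{(1,2)}(Z_1\otimes Z_2)=Z_2\otimes Z_1$, and equip $\mathcal A\otimes\mathcal A$ with the multiplication $(Z_1\otimes Z_2)(W_1\otimes W_2)=Z_1W_1\otimes Z_2W_2$. For each $i$ let $\partial_{\ell,X_i}$ be the left bi-free difference quotient of $X_i$ with respect to $(\mathbb C\langle\hat{\mathbf X}_i\rangle,\mathbb C\langle\mathbf Y\rangle)$ and for each $j$ let $\partial_{r,Y_j}$ be the right bi-free difference quotient of $Y_j$ with respect to $(\mathbb C\langle\mathbf X\rangle,\mathbb C\langle\hat{\mathbf Y}_j\rangle)$. Then for every $P\in\mathcal A$, \[ \sum_{i=1}^n\Big(\partial_{\ell,X_i}(P)(X_i\otimes1)-(1\otimes X_i)\partial_{\ell,X_i}(P)\Big)-\Theta_{(1,2)}\Big(\sum_{j=1}^m\big(\partial_{r,Y_j}(P)(Y_j\otimes1)-(1\otimes Y_j)\partial_{r,Y_j}(P)\big)\Big)=P\otimes1-1\otimes P. \] In particular, if $P\in\mathcal A$ satisfies $\partial_{\ell,X_i}(P)=0$ and $\partial_{r,Y_j}(P)=0$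 for all $i,j$, then $P$ is a scalar multiple of $1$.
   Context: $\hat{\mathbf X}_i$ denotes $(X_1,\dots,X_{i-1},X_{i+1},\dots,X_n)$, similarly $\hat{\mathbf Y}_j$. Bi-free difference quotients: let $L$ ("left letters") and $R$ ("right letters") be sets of generators. For $X\in L$ and a word $Z_1\cdots Z_k$ with each $Z_p\in L\cup R$, $\partial_{\ell,X}(Z_1\cdots Z_k)=\sum_{q:\,Z_q=X}\Big(Z_1\cdots Z_{q-1}\prod_{p>q,\,Z_p\in R}Z_p\Big)\otimes\prod_{p>q,\,Z_p\in L}Z_p$, and for $Y\in R$, $\partial_{r,Y}(Z_1\cdots Z_k)=\sum_{q:\,Z_q=Y}\Big(Z_1\cdots Z_{q-1}\prod_{p>q,\,Z_p\in L}Z_p\Big)\otimes\prod_{p>q,\,Z_p\in R}Z_p$, where all products are taken in increasing order of index (empty product $=1$), extended linearly. "With respect to $(B_\ell,B_r)$" means the left letters are $X$ together with elements of $B_\ell$ (here the other $X$'s) and the right letters are elements of $B_r$ (here the $Y$'s), and analogously on the right. These maps are well defined on $\mathcal A$ since they respect commutation of left letters with right letters. *)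

theory Defs
  imports Complex_Main "HOL-Library.Poly_Mapping"
begin

text \<open>Letters: Inl i stands for X_i, Inr j for Y_j (0-based indices).
  Elements of the free algebra C<X,Y> are finitely supported complex
  combinations of words; elements of the algebraic tensor product of the
  free algebra with itself are finitely supported combinations of pairs of words.\<close>

type_synonym letter = "nat + nat"
type_synonym word = "letter list"
type_synonym fa = "word \<Rightarrow>\<^sub>0 complex"
type_synonym fa2 = "(word \<times> word) \<Rightarrow>\<^sub>0 complex"

definition letters :: "nat \<Rightarrow> nat \<Rightarrow> letter set" where
  "letters n m = Inl ` {..<n} \<union> Inr ` {..<m}"

definition alg :: "nat \<Rightarrow> nat \<Rightarrow> fa set" where
  "alg n m = {p. \<forall>w\<in>Poly_Mapping.keys p. set w \<subseteq> letters n m}"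

definition mono :: "word \<Rightarrow> fa" where
  "mono w = Poly_Mapping.single w 1"

definition one_fa :: fa where
  "one_fa = mono []"

definition Xv :: "nat \<Rightarrow> fa" where "Xv i = mono [Inl i]"
definition Yv :: "nat \<Rightarrow> fa" where "Yv j = mono [Inr j]"

definition scale :: "complex \<Rightarrow> ('a \<Rightarrow>\<^sub>0 complex) \<Rightarrow> ('a \<Rightarrow>\<^sub>0 complex)" where
  "scale c p = Poly_Mapping.map (\<lambda>x. c * x) p"

definition fmul :: "fa \<Rightarrow> fa \<Rightarrow> fa" where
  "fmul p q = (\<Sum>u\<in>Poly_Mapping.keys p. \<Sum>v\<in>Poly_Mapping.keys q.
       Poly_Mapping.single (u @ v) (Poly_Mapping.lookup p u * Poly_Mapping.lookup q v))"

definition tens :: "fa \<Rightarrow> fa \<Rightarrow> fa2" where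
  "tens p q = (\<Sum>u\<in>Poly_Mapping.keys p. \<Sum>v\<in>Poly_Mapping.keys q.
       Poly_Mapping.single (u, v) (Poly_Mapping.lookup p u * Poly_Mapping.lookup q v))"

definition mul2 :: "fa2 \<Rightarrow> fa2 \<Rightarrow> fa2" where
  "mul2 p q = (\<Sum>a\<in>Poly_Mapping.keys p. \<Sum>b\<in>Poly_Mapping.keys q.
       Poly_Mapping.single (fst a @ fst b, snd a @ snd b)
         (Poly_Mapping.lookup p a * Poly_Mapping.lookup q b))"

definition flip2 :: "fa2 \<Rightarrow> fa2" where
  "flip2 p = (\<Sum>a\<in>Poly_Mapping.keys p.
       Poly_Mapping.single (snd a, fst a) (Poly_Mapping.lookup p a))"

definition lin2 :: "(word \<Rightarrow> fa2) \<Rightarrow> fa \<Rightarrow> fa2" where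
  "lin2 f p = (\<Sum>w\<in>Poly_Mapping.keys p. scale (Poly_Mapping.lookup p w) (f w))"

text \<open>S is the predicate of letters on the same side as a.\<close>
definition dq_word :: "(letter \<Rightarrow> bool) \<Rightarrow> letter \<Rightarrow> word \<Rightarrow> fa2" where
  "dq_word S a w = (\<Sum>q\<in>{q. q < length w \<and> w ! q = a}.
      Poly_Mapping.single
        (take q w @ filter (\<lambda>z. \<not> S z) (drop (Suc q) w), filter S (drop (Suc q) w)) 1)"

definition dL :: "nat \<Rightarrow> fa \<Rightarrow> fa2" where
  "dL i = lin2 (dq_word isl (Inl i))"

definition dR :: "nat \<Rightarrow> fa \<Rightarrow> fa2" where
  "dR j = lin2 (dq_word (\<lambda>z. \<not> isl z) (Inr j))"

definition comm_gens :: "nat \<Rightarrow> nat \<Rightarrow> fa set" where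
  "comm_gens n m = {mono [Inl i, Inr j] - mono [Inr j, Inl i] | i j. i < n \<and> j < m}"

text \<open>Two-sided ideal of the free algebra generated by the commutators;
  A = alg n m / cideal n m.\<close>
inductive_set cideal :: "nat \<Rightarrow> nat \<Rightarrow> fa set" for n m where
  zero: "0 \<in> cideal n m"
| add: "p \<in> cideal n m \<Longrightarrow> q \<in> cideal n m \<Longrightarrow> p + q \<in> cideal n m"
| gen: "g \<in> comm_gens n m \<Longrightarrow> a \<in> alg n m \<Longrightarrow> b \<in> alg n m
          \<Longrightarrow> fmul (fmul a g) b \<in> cideal n m"

text \<open>Kernel of the quotient map alg \<otimes> alg \<rightarrow> A \<otimes> A, i.e. I \<otimes> alg + alg \<otimes> I.\<close>
inductive_set ker2 :: "nat \<Rightarrow> nat \<Rightarrow> fa2 set" for n m where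
  zero: "0 \<in> ker2 n m"
| add: "p \<in> ker2 n m \<Longrightarrow> q \<in> ker2 n m \<Longrightarrow> p + q \<in> ker2 n m"
| left: "a \<in> cideal n m \<Longrightarrow> b \<in> alg n m \<Longrightarrow> tens a b \<in> ker2 n m"
| right: "a \<in> alg n m \<Longrightarrow> b \<in> cideal n m \<Longrightarrow> tens a b \<in> ker2 n m"

end

theory Submission
  imports Defs
begin

text \<open>Both sides are linear in P, so it suffices to take P a word w.  Write X(u) and Y(u) for
  the subwords of X-letters and of Y-letters of a word u.  Modulo the commutation relations a pair
  of words (a, b) only depends on X(a), Y(a), X(b), Y(b).  The summand of the X-part coming from
  an X-letter at position k then equals g(k+1) - g(k) with g(k) = X(w<k) Y(w) \<otimes> X(w\<ge>k), where
  w<k and w\<ge>k are the prefix and suffix of w at k; so the X-part telescopes to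
  w \<otimes> 1 - Y(w) \<otimes> X(w), and symmetrically the flipped Y-part telescopes to 1 \<otimes> w - Y(w) \<otimes> X(w).
  For the second claim apply id \<otimes> \<epsilon>, \<epsilon> the constant term, which maps the kernel into the
  ideal because the ideal has no constant terms.\<close>

section \<open>Linear and bilinear extensions\<close>

lemma lookup_scale [simp]: "Poly_Mapping.lookup (scale c p) k = c * Poly_Mapping.lookup p k"
  unfolding scale_def by transfer (simp add: when_def)

lemma scale_add_right: "scale c (p + q) = scale c p + scale c q"
  by (rule poly_mapping_eqI) (simp add: lookup_add algebra_simps)

lemma scale_add_left: "scale (c + d) p = scale c p + scale d p"
  by (rule poly_mapping_eqI) (simp add: lookup_add algebra_simps)

lemma scale_diff_right: "scale c (p - q) = scale c p - scale c q"
  by (rule poly_mapping_eqI) (simp add: lookup_minus algebra_simps)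

lemma scale_scale: "scale c (scale d p) = scale (c * d) p"
  by (rule poly_mapping_eqI) simp

lemma scale_one [simp]: "scale 1 p = p"
  by (rule poly_mapping_eqI) simp

lemma scale_zero_left [simp]: "scale 0 p = 0"
  by (rule poly_mapping_eqI) simp

lemma scale_zero_right [simp]: "scale c 0 = 0"
  by (rule poly_mapping_eqI) simp

lemma scale_minus_one: "scale (-1) p = - p"
  by (rule poly_mapping_eqI) simp

lemma scale_single: "scale c (Poly_Mapping.single k d) = Poly_Mapping.single k (c * d)"
  by (simp add: scale_def)

lemma scale_sum: "scale c (sum f I) = (\<Sum>i\<in>I. scale c (f i))"
  by (rule poly_mapping_eqI) (simp add: lookup_sum sum_distrib_left)

lemma keys_scale_subset: "Poly_Mapping.keys (scale c p) \<subseteq> Poly_Mapping.keys p"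
  by (auto simp: in_keys_iff)

definition lin :: "('a \<Rightarrow> ('b \<Rightarrow>\<^sub>0 complex)) \<Rightarrow> ('a \<Rightarrow>\<^sub>0 complex) \<Rightarrow> ('b \<Rightarrow>\<^sub>0 complex)" where
  "lin g p = (\<Sum>a\<in>Poly_Mapping.keys p. scale (Poly_Mapping.lookup p a) (g a))"

lemma lin2_eq_lin: "lin2 = lin"
  by (intro ext) (simp add: lin2_def lin_def)

lemma lin_eq_sum_superset:
  assumes "finite A" "Poly_Mapping.keys p \<subseteq> A"
  shows "lin g p = (\<Sum>a\<in>A. scale (Poly_Mapping.lookup p a) (g a))"
  unfolding lin_def by (rule sum.mono_neutral_left) (use assms in \<open>auto simp: in_keys_iff\<close>)

lemma lin_add: "lin g (p + q) = lin g p + lin g q"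
proof -
  let ?A = "Poly_Mapping.keys p \<union> Poly_Mapping.keys q"
  have "lin g (p + q) = (\<Sum>a\<in>?A. scale (Poly_Mapping.lookup (p + q) a) (g a))"
    using keys_add[of p q] by (intro lin_eq_sum_superset) auto
  also have "\<dots> = (\<Sum>a\<in>?A. scale (Poly_Mapping.lookup p a) (g a))
                  + (\<Sum>a\<in>?A. scale (Poly_Mapping.lookup q a) (g a))"
    by (simp add: lookup_add scale_add_left sum.distrib)
  also have "\<dots> = lin g p + lin g q"
    by (subst (1 2) lin_eq_sum_superset[of ?A]) auto
  finally show ?thesis .
qed

lemma lin_scale: "lin g (scale c p) = scale c (lin g p)"
proof -
  have "lin g (scale c p)
      = (\<Sum>a\<in>Poly_Mapping.keys p. scale (Poly_Mapping.lookup (scale c p) a) (g a))"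
    using keys_scale_subset[of c p] by (intro lin_eq_sum_superset) auto
  then show ?thesis by (simp add: lin_def scale_sum scale_scale)
qed

lemma lin_single: "lin g (Poly_Mapping.single a c) = scale c (g a)"
  by (simp add: lin_def)

lemma lin_mono: "lin g (mono w) = g w"
  by (simp add: mono_def lin_single)

lemma lin_add_fun: "lin (\<lambda>a. g a + h a) p = lin g p + lin h p"
  by (simp add: lin_def scale_add_right sum.distrib)

lemma lin_scale_fun: "lin (\<lambda>a. scale c (g a)) p = scale c (lin g p)"
  by (simp add: lin_def scale_sum scale_scale mult.commute)

lemma lin_cong: "(\<And>a. a \<in> Poly_Mapping.keys p \<Longrightarrow> g a = h a) \<Longrightarrow> lin g p = lin h p"
  by (simp add: lin_def)

lemma lin_single_one: "lin (\<lambda>a. Poly_Mapping.single a 1) p = p"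
  by (rule poly_mapping_eqI)
    (simp add: lin_def lookup_sum scale_single lookup_single when_def in_keys_iff)

lemma lin_swap: "lin (\<lambda>a. lin (\<lambda>b. F a b) q) p = lin (\<lambda>b. lin (\<lambda>a. F a b) p) q"
  unfolding lin_def by (simp add: scale_sum scale_scale mult.commute) (rule sum.swap)

definition scale_linear :: "(('a \<Rightarrow>\<^sub>0 complex) \<Rightarrow> ('b \<Rightarrow>\<^sub>0 complex)) \<Rightarrow> bool" where
  "scale_linear F \<longleftrightarrow> (\<forall>p q. F (p + q) = F p + F q) \<and> (\<forall>c p. F (scale c p) = scale c (F p))"

lemma scale_linearD:
  assumes "scale_linear F"
  shows "F (p + q) = F p + F q" "F (scale c p) = scale c (F p)" "F 0 = 0"
    "F (- p) = - F p" "F (p - q) = F p - F q" "F (sum f I) = (\<Sum>i\<in>I. F (f i))"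
proof -
  show add: "F (p + q) = F p + F q" for p q using assms by (simp add: scale_linear_def)
  show scale: "F (scale c p) = scale c (F p)" for c p using assms by (simp add: scale_linear_def)
  show zero: "F 0 = 0" using scale[of 0 0] by simp
  show uminus: "F (- p) = - F p" for p using scale[of "-1" p] by (simp add: scale_minus_one)
  show "F (p - q) = F p - F q" using add[of p "- q"] uminus[of q] by simp
  show "F (sum f I) = (\<Sum>i\<in>I. F (f i))"
    by (induction I rule: infinite_finite_induct) (auto simp: zero add)
qed

lemma scale_linear_lin: "scale_linear (lin g)"
  by (simp add: scale_linear_def lin_add lin_scale)

lemma lin_lin: "lin g (lin f p) = lin (\<lambda>a. lin g (f a)) p"
  by (simp add: lin_def[of _ p] scale_linearD[OF scale_linear_lin] lin_scale)

lemma scale_linear_id: "scale_linear (\<lambda>p. p)"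
  by (simp add: scale_linear_def)

lemma scale_linear_diff:
  "scale_linear F \<Longrightarrow> scale_linear G \<Longrightarrow> scale_linear (\<lambda>p. F p - G p)"
  by (simp add: scale_linear_def scale_diff_right algebra_simps)

lemma scale_linear_sum:
  "(\<And>i. i \<in> I \<Longrightarrow> scale_linear (F i)) \<Longrightarrow> scale_linear (\<lambda>p. \<Sum>i\<in>I. F i p)"
  by (simp add: scale_linear_def scale_sum sum.distrib)

lemma scale_linear_comp: "scale_linear F \<Longrightarrow> scale_linear G \<Longrightarrow> scale_linear (\<lambda>p. F (G p))"
  by (simp add: scale_linear_def)

lemma scale_linear_eq_lin: "scale_linear F \<Longrightarrow> F p = lin (\<lambda>a. F (Poly_Mapping.single a 1)) p"
proof -
  assume F: "scale_linear F"
  have "F p = F (lin (\<lambda>a. Poly_Mapping.single a 1) p)" by (simp add: lin_single_one)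
  also have "\<dots> = lin (\<lambda>a. F (Poly_Mapping.single a 1)) p"
    unfolding lin_def by (simp add: scale_linearD[OF F])
  finally show ?thesis .
qed

definition bil :: "('a \<Rightarrow> 'b \<Rightarrow> 'c) \<Rightarrow> ('a \<Rightarrow>\<^sub>0 complex) \<Rightarrow> ('b \<Rightarrow>\<^sub>0 complex) \<Rightarrow> ('c \<Rightarrow>\<^sub>0 complex)" where
  "bil h p q = lin (\<lambda>a. lin (\<lambda>b. Poly_Mapping.single (h a b) 1) q) p"

lemma sum_single_eq_bil:
  "(\<Sum>a\<in>Poly_Mapping.keys p. \<Sum>b\<in>Poly_Mapping.keys q.
     Poly_Mapping.single (h a b) (Poly_Mapping.lookup p a * Poly_Mapping.lookup q b)) = bil h p q"
  unfolding bil_def lin_def by (simp add: scale_sum scale_single scale_scale)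

lemma scale_linear_bil_left: "scale_linear (\<lambda>p. bil h p q)"
  unfolding bil_def by (rule scale_linear_lin)

lemma scale_linear_bil_right: "scale_linear (\<lambda>q. bil h p q)"
  unfolding bil_def scale_linear_def by (simp add: lin_add lin_scale lin_add_fun lin_scale_fun)

lemma bil_single:
  "bil h (Poly_Mapping.single a c) (Poly_Mapping.single b d) = Poly_Mapping.single (h a b) (c * d)"
  unfolding bil_def by (simp add: lin_single scale_single mult.commute)

lemma fmul_eq_bil: "fmul = bil (@)"
  by (intro ext) (simp add: fmul_def sum_single_eq_bil)

lemma tens_eq_bil: "tens = bil Pair"
  by (intro ext) (simp add: tens_def sum_single_eq_bil)

lemma mul2_eq_bil: "mul2 = bil (\<lambda>a b. (fst a @ fst b, snd a @ snd b))"
  by (intro ext) (simp add: mul2_def sum_single_eq_bil)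

lemma flip2_eq_lin: "flip2 = lin (\<lambda>a. Poly_Mapping.single (snd a, fst a) 1)"
  by (intro ext) (simp add: flip2_def lin_def scale_single)

lemma fmul_assoc: "fmul (fmul p q) r = fmul p (fmul q r)"
  unfolding fmul_eq_bil bil_def by (simp only: lin_lin lin_single scale_one append_assoc)

lemma mul2_tens: "mul2 (tens a b) (tens c d) = tens (fmul a c) (fmul b d)"
  unfolding mul2_eq_bil tens_eq_bil fmul_eq_bil bil_def
  by (simp only: lin_lin lin_single scale_one fst_conv snd_conv) (rule lin_cong, rule lin_swap)

lemma flip2_tens: "flip2 (tens a b) = tens b a"
  unfolding flip2_eq_lin tens_eq_bil bil_def
  by (simp only: lin_lin lin_single scale_one fst_conv snd_conv) (rule lin_swap)

lemma fmul_mono: "fmul (mono u) (mono v) = mono (u @ v)"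
  by (simp add: fmul_eq_bil mono_def bil_single)

lemma tens_mono: "tens (mono a) (mono b) = Poly_Mapping.single (a, b) 1"
  by (simp add: tens_eq_bil mono_def bil_single)

lemma mul2_single:
  "mul2 (Poly_Mapping.single a c) (Poly_Mapping.single b d)
     = Poly_Mapping.single (fst a @ fst b, snd a @ snd b) (c * d)"
  by (simp add: mul2_eq_bil bil_single)

lemma scale_linear_fmul_left: "scale_linear (\<lambda>p. fmul p q)"
  unfolding fmul_eq_bil by (rule scale_linear_bil_left)

lemma scale_linear_fmul_right: "scale_linear (\<lambda>q. fmul p q)"
  unfolding fmul_eq_bil by (rule scale_linear_bil_right)

lemma scale_linear_tens_left: "scale_linear (\<lambda>a. tens a b)"
  unfolding tens_eq_bil by (rule scale_linear_bil_left)

lemma scale_linear_tens_right: "scale_linear (\<lambda>b. tens a b)"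
  unfolding tens_eq_bil by (rule scale_linear_bil_right)

lemma scale_linear_mul2_left: "scale_linear (\<lambda>k. mul2 k l)"
  unfolding mul2_eq_bil by (rule scale_linear_bil_left)

lemma scale_linear_mul2_right: "scale_linear (\<lambda>l. mul2 k l)"
  unfolding mul2_eq_bil by (rule scale_linear_bil_right)

lemma scale_linear_flip2: "scale_linear flip2"
  unfolding flip2_eq_lin by (rule scale_linear_lin)

lemmas fmul_linear_left = scale_linearD[OF scale_linear_fmul_left]
lemmas fmul_linear_right = scale_linearD[OF scale_linear_fmul_right]
lemmas tens_linear_left = scale_linearD[OF scale_linear_tens_left]
lemmas tens_linear_right = scale_linearD[OF scale_linear_tens_right]
lemmas mul2_linear_left = scale_linearD[OF scale_linear_mul2_left]
lemmas mul2_linear_right = scale_linearD[OF scale_linear_mul2_right]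
lemmas flip2_linear = scale_linearD[OF scale_linear_flip2]

section \<open>The commutation ideal and its tensor extension\<close>

lemma keys_fmul_subset:
  "Poly_Mapping.keys (fmul p q) \<subseteq> {u @ v | u v. u \<in> Poly_Mapping.keys p \<and> v \<in> Poly_Mapping.keys q}"
  unfolding fmul_def
  by (rule order.trans[OF keys_sum]) (fastforce dest!: subsetD[OF keys_sum] split: if_splits)

lemma alg_scale: "p \<in> alg n m \<Longrightarrow> scale c p \<in> alg n m"
  unfolding alg_def using keys_scale_subset[of c p] by auto

lemma alg_mono: "set w \<subseteq> letters n m \<Longrightarrow> mono w \<in> alg n m"
  unfolding alg_def mono_def by simp

lemma alg_fmul: "p \<in> alg n m \<Longrightarrow> q \<in> alg n m \<Longrightarrow> fmul p q \<in> alg n m"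
  unfolding alg_def using keys_fmul_subset[of p q] by fastforce

lemma one_fa_alg: "one_fa \<in> alg n m"
  by (simp add: one_fa_def alg_mono)

lemma Xv_alg: "i < n \<Longrightarrow> Xv i \<in> alg n m"
  by (simp add: Xv_def alg_mono letters_def)

lemma Yv_alg: "j < m \<Longrightarrow> Yv j \<in> alg n m"
  by (simp add: Yv_def alg_mono letters_def)

lemma cideal_scale: "p \<in> cideal n m \<Longrightarrow> scale c p \<in> cideal n m"
proof (induction rule: cideal.induct)
  case (gen g a b)
  have "scale c (fmul (fmul a g) b) = fmul (fmul (scale c a) g) b"
    by (simp add: fmul_linear_left)
  with gen show ?case by (simp add: cideal.gen alg_scale)
qed (auto simp: scale_add_right intro: cideal.intros)

lemma cideal_diff: "p \<in> cideal n m \<Longrightarrow> q \<in> cideal n m \<Longrightarrow> p - q \<in> cideal n m"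
  using cideal.add[OF _ cideal_scale[of q n m "-1"], of p] by (simp add: scale_minus_one)

lemma cideal_fmul_right: "p \<in> cideal n m \<Longrightarrow> c \<in> alg n m \<Longrightarrow> fmul p c \<in> cideal n m"
proof (induction rule: cideal.induct)
  case (gen g a b)
  then show ?case by (simp add: fmul_assoc[of "fmul a g"] cideal.gen alg_fmul)
qed (auto simp: fmul_linear_left intro: cideal.intros)

lemma cideal_fmul_left: "p \<in> cideal n m \<Longrightarrow> c \<in> alg n m \<Longrightarrow> fmul c p \<in> cideal n m"
proof (induction rule: cideal.induct)
  case (gen g a b)
  then show ?case by (simp flip: fmul_assoc add: cideal.gen alg_fmul)
qed (auto simp: fmul_linear_right intro: cideal.intros)

lemma ker2_scale: "k \<in> ker2 n m \<Longrightarrow> scale c k \<in> ker2 n m"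
proof (induction rule: ker2.induct)
  case (left a b)
  then show ?case using ker2.left[OF cideal_scale] by (simp flip: tens_linear_left)
next
  case (right a b)
  then show ?case using ker2.right[OF alg_scale] by (simp flip: tens_linear_left)
qed (auto simp: scale_add_right intro: ker2.intros)

lemma ker2_diff: "k \<in> ker2 n m \<Longrightarrow> l \<in> ker2 n m \<Longrightarrow> k - l \<in> ker2 n m"
  using ker2.add[OF _ ker2_scale[of l n m "-1"], of k] by (simp add: scale_minus_one)

lemma ker2_sum: "(\<And>i. i \<in> I \<Longrightarrow> f i \<in> ker2 n m) \<Longrightarrow> sum f I \<in> ker2 n m"
  by (induction I rule: infinite_finite_induct) (auto intro: ker2.intros)

lemma ker2_mul2_right:
  "k \<in> ker2 n m \<Longrightarrow> a \<in> alg n m \<Longrightarrow> b \<in> alg n m \<Longrightarrow> mul2 k (tens a b) \<in> ker2 n m"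
  by (induction rule: ker2.induct)
    (auto simp: mul2_linear_left mul2_tens cideal_fmul_right alg_fmul intro: ker2.intros)

lemma ker2_mul2_left:
  "k \<in> ker2 n m \<Longrightarrow> a \<in> alg n m \<Longrightarrow> b \<in> alg n m \<Longrightarrow> mul2 (tens a b) k \<in> ker2 n m"
  by (induction rule: ker2.induct)
    (auto simp: mul2_linear_right mul2_tens cideal_fmul_left alg_fmul intro: ker2.intros)

lemma ker2_flip2: "k \<in> ker2 n m \<Longrightarrow> flip2 k \<in> ker2 n m"
  by (induction rule: ker2.induct)
    (auto simp: flip2_tens flip2_linear intro: ker2.intros)

section \<open>Normal form of words\<close>

lemma cideal_swap_adjacent:
  assumes "i < n" "j < m" "set u \<subseteq> letters n m" "set v \<subseteq> letters n m"
  shows "mono (u @ Inr j # Inl i # v) - mono (u @ Inl i # Inr j # v) \<in> cideal n m"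
proof -
  have "fmul (fmul (mono u) (mono [Inl i, Inr j] - mono [Inr j, Inl i])) (mono v) \<in> cideal n m"
    using assms by (intro cideal.gen alg_mono) (auto simp: comm_gens_def)
  then have "mono (u @ Inl i # Inr j # v) - mono (u @ Inr j # Inl i # v) \<in> cideal n m"
    by (simp add: fmul_linear_left fmul_linear_right fmul_mono)
  then show ?thesis
    using cideal_diff[OF cideal.zero] by fastforce
qed

lemma cideal_move_right_letter:
  assumes "set u \<subseteq> letters n m" "set v \<subseteq> letters n m" "set xs \<subseteq> letters n m"
    "\<forall>x\<in>set xs. isl x" "y \<in> letters n m" "\<not> isl y"
  shows "mono (u @ y # xs @ v) - mono (u @ xs @ y # v) \<in> cideal n m"
  using assms
proof (induction xs arbitrary: u)
  case Nil
  then show ?case by (simp add: cideal.zero)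
next
  case (Cons x xs)
  obtain i where i: "x = Inl i" "i < n" using Cons.prems(3,4) by (auto simp: letters_def)
  obtain j where j: "y = Inr j" "j < m" using Cons.prems(5,6) by (auto simp: letters_def)
  have "mono (u @ y # x # xs @ v) - mono (u @ x # y # xs @ v) \<in> cideal n m"
    using Cons.prems i j by (simp add: cideal_swap_adjacent)
  moreover have "mono ((u @ [x]) @ y # xs @ v) - mono ((u @ [x]) @ xs @ y # v) \<in> cideal n m"
    using Cons.prems by (intro Cons.IH) auto
  ultimately show ?case
    using cideal.add by fastforce
qed

definition normal_word :: "word \<Rightarrow> word" where
  "normal_word w = filter isl w @ filter (\<lambda>z. \<not> isl z) w"

lemma normal_word_eqI:
  assumes "S = isl \<or> S = (\<lambda>z. \<not> isl z)"
    and "filter S a = filter S b" "filter (\<lambda>z. \<not> S z) a = filter (\<lambda>z. \<not> S z) b"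
  shows "normal_word a = normal_word b"
  using assms by (auto simp: normal_word_def)

lemma cideal_normal_word:
  assumes "set u \<subseteq> letters n m" "set v \<subseteq> letters n m" "set w \<subseteq> letters n m"
  shows "mono (u @ w @ v) - mono (u @ normal_word w @ v) \<in> cideal n m"
  using assms
proof (induction w arbitrary: u)
  case Nil
  then show ?case by (simp add: normal_word_def cideal.zero)
next
  case (Cons a w)
  have IH: "mono ((u @ [a]) @ w @ v) - mono ((u @ [a]) @ normal_word w @ v) \<in> cideal n m"
    using Cons.prems by (intro Cons.IH) auto
  show ?case
  proof (cases "isl a")
    case True
    with IH show ?thesis by (simp add: normal_word_def)
  next
    case False
    let ?xs = "filter isl w" and ?ys = "filter (\<lambda>z. \<not> isl z) w"
    have "mono (u @ a # ?xs @ ?ys @ v) - mono (u @ ?xs @ a # ?ys @ v) \<in> cideal n m"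
      using Cons.prems False by (intro cideal_move_right_letter) auto
    with IH False show ?thesis
      using cideal.add by (fastforce simp: normal_word_def)
  qed
qed

lemma ker2_single_normal_word:
  assumes "set a \<subseteq> letters n m" "set b \<subseteq> letters n m" "set a' \<subseteq> letters n m"
    "set b' \<subseteq> letters n m" "normal_word a = normal_word a'" "normal_word b = normal_word b'"
  shows "Poly_Mapping.single (a, b) 1 - Poly_Mapping.single (a', b') 1 \<in> ker2 n m"
proof -
  have normal: "mono c - mono (normal_word c) \<in> cideal n m" if "set c \<subseteq> letters n m" for c
    using cideal_normal_word[of "[]" n m "[]" c] that by simp
  have equiv: "mono c - mono c' \<in> cideal n m"
    if "set c \<subseteq> letters n m" "set c' \<subseteq> letters n m" "normal_word c = normal_word c'" for c c'
    using cideal_diff[OF normal[OF that(1)] normal[OF that(2)]] that(3) by simp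
  have "mono a - mono a' \<in> cideal n m" "mono b - mono b' \<in> cideal n m"
    using assms by (simp_all add: equiv)
  then have "tens (mono a - mono a') (mono b) + tens (mono a') (mono b - mono b') \<in> ker2 n m"
    using assms(2,3) by (intro ker2.add ker2.left ker2.right alg_mono)
  then show ?thesis
    by (simp add: tens_linear_left tens_linear_right tens_mono)
qed

section \<open>Telescoping the commutators of the difference quotients\<close>

definition commutator_term :: "(letter \<Rightarrow> bool) \<Rightarrow> word \<Rightarrow> nat \<Rightarrow> fa2" where
  "commutator_term S w q =
     Poly_Mapping.single (take q w @ filter (\<lambda>z. \<not> S z) (drop (Suc q) w) @ [w ! q],
                          filter S (drop (Suc q) w)) 1
   - Poly_Mapping.single (take q w @ filter (\<lambda>z. \<not> S z) (drop (Suc q) w),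
                          w ! q # filter S (drop (Suc q) w)) 1"

lemma dq_word_commutator:
  "mul2 (dq_word S a w) (Poly_Mapping.single ([a], []) 1)
     - mul2 (Poly_Mapping.single ([], [a]) 1) (dq_word S a w)
   = (\<Sum>q<length w. if w ! q = a then commutator_term S w q else 0)"
proof -
  have "mul2 (dq_word S a w) (Poly_Mapping.single ([a], []) 1)
          - mul2 (Poly_Mapping.single ([], [a]) 1) (dq_word S a w)
      = (\<Sum>q\<in>{q. q < length w \<and> w ! q = a}. commutator_term S w q)"
    unfolding dq_word_def
    by (auto simp: mul2_linear_left mul2_linear_right mul2_single commutator_term_def
        sum_subtractf intro!: sum.cong)
  moreover have "{q. q < length w \<and> w ! q = a} = {q \<in> {..<length w}. w ! q = a}"
    by auto
  ultimately show ?thesis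
    by (simp only: sum.inter_filter[OF finite_lessThan])
qed

lemma sum_left_letters:
  assumes "set w \<subseteq> letters n m"
  shows "(\<Sum>i<n. \<Sum>q<length w. if w ! q = Inl i then f q else 0)
       = (\<Sum>q<length w. if isl (w ! q) then f q else 0)"
proof -
  have "(\<Sum>i<n. \<Sum>q<length w. if w ! q = Inl i then f q else 0)
      = (\<Sum>q<length w. \<Sum>i<n. if w ! q = Inl i then f q else 0)"
    by (rule sum.swap)
  also have "\<dots> = (\<Sum>q<length w. if isl (w ! q) then f q else 0)"
  proof (rule sum.cong)
    fix q assume "q \<in> {..<length w}"
    then have "w ! q \<in> letters n m" using assms nth_mem by blast
    then show "(\<Sum>i<n. if w ! q = Inl i then f q else 0) = (if isl (w ! q) then f q else 0)"
      by (auto simp: letters_def)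
  qed simp
  finally show ?thesis .
qed

lemma sum_right_letters:
  assumes "set w \<subseteq> letters n m"
  shows "(\<Sum>j<m. \<Sum>q<length w. if w ! q = Inr j then f q else 0)
       = (\<Sum>q<length w. if \<not> isl (w ! q) then f q else 0)"
proof -
  have "(\<Sum>j<m. \<Sum>q<length w. if w ! q = Inr j then f q else 0)
      = (\<Sum>q<length w. \<Sum>j<m. if w ! q = Inr j then f q else 0)"
    by (rule sum.swap)
  also have "\<dots> = (\<Sum>q<length w. if \<not> isl (w ! q) then f q else 0)"
  proof (rule sum.cong)
    fix q assume "q \<in> {..<length w}"
    then have "w ! q \<in> letters n m" using assms nth_mem by blast
    then show "(\<Sum>j<m. if w ! q = Inr j then f q else 0) = (if \<not> isl (w ! q) then f q else 0)"
      by (auto simp: letters_def)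
  qed simp
  finally show ?thesis .
qed

lemma left_commutators_mono:
  assumes "set w \<subseteq> letters n m"
  shows "(\<Sum>i<n. mul2 (dL i (mono w)) (tens (Xv i) one_fa) - mul2 (tens one_fa (Xv i)) (dL i (mono w)))
       = (\<Sum>q<length w. if isl (w ! q) then commutator_term isl w q else 0)"
  using sum_left_letters[OF assms, of "commutator_term isl w"]
  by (simp add: dL_def lin2_eq_lin lin_mono Xv_def one_fa_def tens_mono dq_word_commutator)

lemma right_commutators_mono:
  assumes "set w \<subseteq> letters n m"
  shows "(\<Sum>j<m. mul2 (dR j (mono w)) (tens (Yv j) one_fa) - mul2 (tens one_fa (Yv j)) (dR j (mono w)))
       = (\<Sum>q<length w. if \<not> isl (w ! q) then commutator_term (\<lambda>z. \<not> isl z) w q else 0)"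
  using sum_right_letters[OF assms, of "commutator_term (\<lambda>z. \<not> isl z) w"]
  by (simp add: dR_def lin2_eq_lin lin_mono Yv_def one_fa_def tens_mono dq_word_commutator)

definition side_split :: "(letter \<Rightarrow> bool) \<Rightarrow> word \<Rightarrow> nat \<Rightarrow> fa2" where
  "side_split S w k =
     Poly_Mapping.single (filter S (take k w) @ filter (\<lambda>z. \<not> S z) w, filter S (drop k w)) 1"

lemma commutator_term_telescopes:
  assumes side: "S = isl \<or> S = (\<lambda>z. \<not> isl z)" and w: "set (u @ x # v) \<subseteq> letters n m"
  shows "(if S x then commutator_term S (u @ x # v) (length u) else 0)
     - (side_split S (u @ x # v) (Suc (length u)) - side_split S (u @ x # v) (length u))
     \<in> ker2 n m"
proof (cases "S x")
  case True
  let ?S = "filter S" and ?T = "filter (\<lambda>z. \<not> S z)"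
  have "commutator_term S (u @ x # v) (length u)
      - (side_split S (u @ x # v) (Suc (length u)) - side_split S (u @ x # v) (length u))
    = (Poly_Mapping.single (u @ ?T v @ [x], ?S v) 1
         - Poly_Mapping.single (?S u @ [x] @ ?T u @ ?T v, ?S v) 1)
      - (Poly_Mapping.single (u @ ?T v, x # ?S v) 1
         - Poly_Mapping.single (?S u @ ?T u @ ?T v, x # ?S v) 1)"
    using True by (simp add: commutator_term_def side_split_def nth_append)
  also have "\<dots> \<in> ker2 n m"
    using w side True by (intro ker2_diff ker2_single_normal_word normal_word_eqI) auto
  finally show ?thesis
    using True by simp
next
  case False
  then show ?thesis
    by (simp add: side_split_def ker2.zero)
qed

lemma commutator_terms_telescope:
  assumes side: "S = isl \<or> S = (\<lambda>z. \<not> isl z)" and w: "set w \<subseteq> letters n m"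
  shows "(\<Sum>q<length w. if S (w ! q) then commutator_term S w q else 0)
     - (side_split S w (length w) - side_split S w 0) \<in> ker2 n m"
proof -
  have "(\<Sum>q<length w. if S (w ! q) then commutator_term S w q else 0)
          - (side_split S w (length w) - side_split S w 0)
      = (\<Sum>q<length w. (if S (w ! q) then commutator_term S w q else 0)
          - (side_split S w (Suc q) - side_split S w q))"
    by (subst sum_subtractf) (simp only: sum_lessThan_telescope)
  also have "\<dots> \<in> ker2 n m"
  proof (rule ker2_sum)
    fix q assume "q \<in> {..<length w}"
    then have split: "w = take q w @ w ! q # drop (Suc q) w" and q: "length (take q w) = q"
      by (simp_all add: id_take_nth_drop)
    show "(if S (w ! q) then commutator_term S w q else 0)
            - (side_split S w (Suc q) - side_split S w q) \<in> ker2 n m"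
      using commutator_term_telescopes[OF side, of "take q w" "w ! q" "drop (Suc q) w"] w
      unfolding q split[symmetric] by blast
  qed
  finally show ?thesis .
qed

definition euler_defect :: "nat \<Rightarrow> nat \<Rightarrow> fa \<Rightarrow> fa2" where
  "euler_defect n m P =
     (\<Sum>i<n. mul2 (dL i P) (tens (Xv i) one_fa) - mul2 (tens one_fa (Xv i)) (dL i P))
     - flip2 (\<Sum>j<m. mul2 (dR j P) (tens (Yv j) one_fa) - mul2 (tens one_fa (Yv j)) (dR j P))
     - (tens P one_fa - tens one_fa P)"

lemma euler_defect_mono:
  assumes w: "set w \<subseteq> letters n m"
  shows "euler_defect n m (mono w) \<in> ker2 n m"
proof -
  let ?X = "side_split isl w" and ?Y = "side_split (\<lambda>z. \<not> isl z) w"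
  let ?XS = "\<Sum>q<length w. if isl (w ! q) then commutator_term isl w q else 0"
  let ?YS = "\<Sum>q<length w. if \<not> isl (w ! q) then commutator_term (\<lambda>z. \<not> isl z) w q else 0"
  have X: "?XS - (?X (length w) - ?X 0) \<in> ker2 n m"
    using w by (intro commutator_terms_telescope) auto
  have "flip2 (?YS - (?Y (length w) - ?Y 0)) \<in> ker2 n m"
    using w by (intro ker2_flip2 commutator_terms_telescope) auto
  moreover have "flip2 (?Y 0) = ?X 0"
    by (simp add: side_split_def flip2_eq_lin lin_single)
  ultimately have Y: "flip2 ?YS - (flip2 (?Y (length w)) - ?X 0) \<in> ker2 n m"
    by (simp add: flip2_linear)
  have L: "tens (mono w) one_fa - ?X (length w) \<in> ker2 n m"
    unfolding one_fa_def tens_mono side_split_def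
    using w by (intro ker2_single_normal_word) (auto simp: normal_word_def)
  have R: "tens one_fa (mono w) - flip2 (?Y (length w)) \<in> ker2 n m"
    unfolding one_fa_def tens_mono side_split_def
    using w by (simp add: flip2_eq_lin lin_single)
      (intro ker2_single_normal_word, auto simp: normal_word_def)
  have decomposition: "euler_defect n m (mono w)
      = (?XS - (?X (length w) - ?X 0)) - (flip2 ?YS - (flip2 (?Y (length w)) - ?X 0))
        - (tens (mono w) one_fa - ?X (length w)) + (tens one_fa (mono w) - flip2 (?Y (length w)))"
    unfolding euler_defect_def left_commutators_mono[OF w] right_commutators_mono[OF w]
    by (simp add: algebra_simps)
  show ?thesis
    unfolding decomposition by (intro ker2.add ker2_diff X Y L R)
qed

lemma scale_linear_euler_defect: "scale_linear (euler_defect n m)"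
proof -
  have dq: "scale_linear (dL i)" "scale_linear (dR j)" for i j
    unfolding dL_def dR_def lin2_eq_lin by (simp_all add: scale_linear_lin)
  show ?thesis
    unfolding euler_defect_def
    by (intro scale_linear_diff scale_linear_sum dq scale_linear_id
        scale_linear_comp[OF scale_linear_mul2_left] scale_linear_comp[OF scale_linear_mul2_right]
        scale_linear_comp[OF scale_linear_tens_left] scale_linear_comp[OF scale_linear_tens_right]
        scale_linear_comp[OF scale_linear_flip2])
qed

lemma euler_defect_ker2:
  assumes P: "P \<in> alg n m"
  shows "euler_defect n m P \<in> ker2 n m"
proof -
  have "euler_defect n m P = lin (\<lambda>w. euler_defect n m (mono w)) P"
    unfolding mono_def by (rule scale_linear_eq_lin[OF scale_linear_euler_defect])
  also have "\<dots> \<in> ker2 n m"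
    unfolding lin_def using P
    by (intro ker2_sum ker2_scale euler_defect_mono) (auto simp: alg_def)
  finally show ?thesis .
qed

definition contract_right :: "fa2 \<Rightarrow> fa" where
  "contract_right = lin (\<lambda>(u, v). if v = [] then mono u else 0)"

lemma scale_linear_contract_right: "scale_linear contract_right"
  unfolding contract_right_def by (rule scale_linear_lin)

lemmas contract_right_linear = scale_linearD[OF scale_linear_contract_right]

lemma contract_right_tens: "contract_right (tens a b) = scale (Poly_Mapping.lookup b []) a"
proof -
  have "lin (\<lambda>v. if v = [] then mono u else 0) b = scale (Poly_Mapping.lookup b []) (mono u)" for u
    by (simp add: lin_def if_distrib in_keys_iff cong: if_cong)
  then have "contract_right (tens a b) = lin (\<lambda>u. scale (Poly_Mapping.lookup b []) (mono u)) a"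
    unfolding contract_right_def tens_eq_bil bil_def by (simp add: lin_lin lin_single)
  then show ?thesis
    by (simp add: lin_scale_fun mono_def lin_single_one)
qed

lemma cideal_lookup_Nil: "p \<in> cideal n m \<Longrightarrow> Poly_Mapping.lookup p [] = 0"
proof (induction rule: cideal.induct)
  case (gen g a b)
  have "Poly_Mapping.keys g \<subseteq> {w. length w = 2}"
    using gen(1) keys_diff by (fastforce simp: comm_gens_def mono_def)
  then have "[] \<notin> Poly_Mapping.keys (fmul a g)"
    using keys_fmul_subset[of a g] by fastforce
  then have "[] \<notin> Poly_Mapping.keys (fmul (fmul a g) b)"
    using keys_fmul_subset[of "fmul a g" b] by fastforce
  then show ?case
    by (simp add: in_keys_iff)
qed (simp_all add: lookup_add)

lemma contract_right_ker2: "k \<in> ker2 n m \<Longrightarrow> contract_right k \<in> cideal n m"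
  by (induction rule: ker2.induct)
    (auto simp: contract_right_linear contract_right_tens cideal_lookup_Nil
      intro: cideal.intros cideal_scale)

theorem proposition2p13:
  fixes n m :: nat and P :: fa
  assumes "P \<in> alg n m"
  shows "((\<Sum>i<n. mul2 (dL i P) (tens (Xv i) one_fa) - mul2 (tens one_fa (Xv i)) (dL i P))
          - flip2 (\<Sum>j<m. mul2 (dR j P) (tens (Yv j) one_fa) - mul2 (tens one_fa (Yv j)) (dR j P))
          - (tens P one_fa - tens one_fa P)) \<in> ker2 n m
       \<and> (((\<forall>i<n. dL i P \<in> ker2 n m) \<and> (\<forall>j<m. dR j P \<in> ker2 n m))
            \<longrightarrow> (\<exists>c. P - scale c one_fa \<in> cideal n m))"
proof (fold euler_defect_def, intro conjI impI)
  show defect: "euler_defect n m P \<in> ker2 n m"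
    using assms by (rule euler_defect_ker2)
  assume "(\<forall>i<n. dL i P \<in> ker2 n m) \<and> (\<forall>j<m. dR j P \<in> ker2 n m)"
  then have "(\<Sum>i<n. mul2 (dL i P) (tens (Xv i) one_fa) - mul2 (tens one_fa (Xv i)) (dL i P))
      - flip2 (\<Sum>j<m. mul2 (dR j P) (tens (Yv j) one_fa) - mul2 (tens one_fa (Yv j)) (dR j P))
      \<in> ker2 n m"
    by (intro ker2_diff ker2_flip2 ker2_sum ker2_mul2_left ker2_mul2_right Xv_alg Yv_alg one_fa_alg)
      auto
  with defect have "tens P one_fa - tens one_fa P \<in> ker2 n m"
    unfolding euler_defect_def using ker2_diff by fastforce
  then have "contract_right (tens P one_fa - tens one_fa P) \<in> cideal n m"
    by (rule contract_right_ker2)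
  then show "\<exists>c. P - scale c one_fa \<in> cideal n m"
    by (auto simp: contract_right_linear contract_right_tens one_fa_def mono_def)
qed

end
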